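(* Let $Z\in\mathbb{R}^{n\times m}$, and let $\theta=(\theta_1,\dots,\theta_q)^T$ with $\theta_1=\sigma^2>0$, where $\Sigma=\Sigma(\theta_2,\dots,\theta_q)\in\mathbb{R}^{m\times m}$ is a covariance matrix depending differentiably on $\theta_2,\dots,\theta_q$. Put $C=Z\Sigma Z^T+\sigma^2I_n$. For each $i$ let $N(i)\subseteq\{1,\dots,i-1\}$, $A_i=(Z\Sigma Z^T)_{i,N(i)}(C_{N(i)})^{-1}$, $D_i=C_{i,i}-A_i(Z\Sigma Z^T)_{N(i),i}$; let $B$ be the unit lower triangular $n\times n$ matrix with $(B)_{i,N(i)}=-A_i$ and zeros elsewhere off the diagonal, and $D=\mathrm{diag}(D_1,\dots,D_n)$. Consider the model $y\sim\mathcal{N}(F,\tilde\Psi)$ with $\tilde\Psi=B^{-1}DB^{-T}$ and fixed mean $F\in\mathbb{R}^n$. Then its Fisher information matrix $I\in\mathbb{R}^{q\times q}$ with respect to $\theta$, $(I)_{kl}=\frac12\mathrm{tr}\left(\tilde\Psi^{-1}\frac{\partial\tilde\Psi}{\partial\theta_k}\tilde\Psi^{-1}\frac{\partial\tilde\Psi}{\partial\theta_l}\right)$, has entries $$(I)_{kl}=\sum_{i,j=1}^n\left(D^{-1}\frac{\partial B}{\partial\theta_k}B^{-1}\right)_{ij}\left(\frac{\partial B}{\partial\theta_l}B^{-1}D\right)_{ij}+\frac12\sum_{i=1}^nD_i^{-2}\frac{\partial D_i}{\partial\theta_k}\frac{\partial D_i}{\partial\theta_l},\qquad 1\le k,l\le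 q,$$ where $\frac{\partial B}{\partial\theta_k}$ (lower triangular with zero diagonal, non-zero entries $(\frac{\partial B}{\partial\theta_k})_{i,N(i)}=-\frac{\partial A_i}{\partial\theta_k}$) and $\frac{\partial D}{\partial\theta_k}=\mathrm{diag}(\frac{\partial D_i}{\partial\theta_k})$ are the entrywise derivatives of $B$ and $D$.
   Context: For a matrix $M$, $M_{i,N(i)}$ is the submatrix with row $i$ and columns $N(i)$, $M_{N(i),i}$ the submatrix with rows $N(i)$ and column $i$, and $M_{N(i)}$ the submatrix with rows and columns $N(i)$. The model $\mathcal{N}(F,B^{-1}DB^{-T})$ is the Vecchia approximation of $y=F+Zb+\epsilon$, $b\sim\mathcal{N}(0,\Sigma)$, $\epsilon\sim\mathcal{N}(0,\sigma^2I_n)$, obtained by replacing each conditional density $p(y_i\mid y_1,\dots,y_{i-1})$ by $p(y_i\mid y_{N(i)})$. *)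

theory Defs
  imports Complex_Main "Jordan_Normal_Form.Gauss_Jordan_Elimination" "Jordan_Normal_Form.DL_Submatrix"
begin

text \<open>Conventions: matrices are Jordan_Normal_Form matrices, indexed from 0.
  The parameter vector theta is a function nat => real; its coordinates
  0, ..., q-1 correspond to the paper's theta_1, ..., theta_q (theta 0 = sigma^2).\<close>

definition trace_mat :: "real mat \<Rightarrow> real" where
  "trace_mat A = (\<Sum>i<dim_row A. A $$ (i,i))"

definition inv_mat :: "real mat \<Rightarrow> real mat" where
  "inv_mat A = the (mat_inverse A)"

definition covariance_mat :: "nat \<Rightarrow> real mat \<Rightarrow> bool" where
  "covariance_mat m S \<longleftrightarrow> S \<in> carrier_mat m m \<and> transpose_mat S = S \<and>
     (\<forall>x \<in> carrier_vec m. 0 \<le> x \<bullet> (S *\<^sub>v x))"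

definition partial_deriv :: "((nat \<Rightarrow> real) \<Rightarrow> real) \<Rightarrow> nat \<Rightarrow> (nat \<Rightarrow> real) \<Rightarrow> real" where
  "partial_deriv f k \<theta> = (SOME D. ((\<lambda>t. f (\<theta>(k := t))) has_real_derivative D) (at (\<theta> k)))"

definition has_partial_deriv_at :: "((nat \<Rightarrow> real) \<Rightarrow> real) \<Rightarrow> nat \<Rightarrow> (nat \<Rightarrow> real) \<Rightarrow> bool" where
  "has_partial_deriv_at f k \<theta> \<longleftrightarrow> (\<lambda>t. f (\<theta>(k := t))) differentiable (at (\<theta> k))"

definition mat_partial_deriv :: "((nat \<Rightarrow> real) \<Rightarrow> real mat) \<Rightarrow> nat \<Rightarrow> (nat \<Rightarrow> real) \<Rightarrow> real mat" where
  "mat_partial_deriv M k \<theta> =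
     mat (dim_row (M \<theta>)) (dim_col (M \<theta>)) (\<lambda>(i,j). partial_deriv (\<lambda>\<theta>'. M \<theta>' $$ (i,j)) k \<theta>)"

definition ZSZ :: "real mat \<Rightarrow> ((nat \<Rightarrow> real) \<Rightarrow> real mat) \<Rightarrow> (nat \<Rightarrow> real) \<Rightarrow> real mat" where
  "ZSZ Z Sig \<theta> = Z * Sig \<theta> * transpose_mat Z"

definition Cmat :: "real mat \<Rightarrow> ((nat \<Rightarrow> real) \<Rightarrow> real mat) \<Rightarrow> (nat \<Rightarrow> real) \<Rightarrow> real mat" where
  "Cmat Z Sig \<theta> = ZSZ Z Sig \<theta> + \<theta> 0 \<cdot>\<^sub>m 1\<^sub>m (dim_row Z)"

definition Avec :: "real mat \<Rightarrow> ((nat \<Rightarrow> real) \<Rightarrow> real mat) \<Rightarrow> (nat \<Rightarrow> nat set) \<Rightarrow> nat \<Rightarrow> (nat \<Rightarrow> real) \<Rightarrow> real mat" where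
  "Avec Z Sig N i \<theta> = submatrix (ZSZ Z Sig \<theta>) {i} (N i) * inv_mat (submatrix (Cmat Z Sig \<theta>) (N i) (N i))"

definition Dval :: "real mat \<Rightarrow> ((nat \<Rightarrow> real) \<Rightarrow> real mat) \<Rightarrow> (nat \<Rightarrow> nat set) \<Rightarrow> nat \<Rightarrow> (nat \<Rightarrow> real) \<Rightarrow> real" where
  "Dval Z Sig N i \<theta> = Cmat Z Sig \<theta> $$ (i,i) - (Avec Z Sig N i \<theta> * submatrix (ZSZ Z Sig \<theta>) (N i) {i}) $$ (0,0)"

text \<open>B: unit lower triangular, B_{i,N(i)} = -A_i, zero elsewhere off the diagonal.
  The column j in N(i) is the (card {a in N(i). a < j})-th column of the submatrix.\<close>
definition Bmat :: "real mat \<Rightarrow> ((nat \<Rightarrow> real) \<Rightarrow> real mat) \<Rightarrow> (nat \<Rightarrow> nat set) \<Rightarrow> (nat \<Rightarrow> real) \<Rightarrow> real mat" where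
  "Bmat Z Sig N \<theta> = mat (dim_row Z) (dim_row Z) (\<lambda>(i,j).
      if i = j then 1
      else if j \<in> N i then - (Avec Z Sig N i \<theta> $$ (0, card {a \<in> N i. a < j}))
      else 0)"

definition Dmat :: "real mat \<Rightarrow> ((nat \<Rightarrow> real) \<Rightarrow> real mat) \<Rightarrow> (nat \<Rightarrow> nat set) \<Rightarrow> (nat \<Rightarrow> real) \<Rightarrow> real mat" where
  "Dmat Z Sig N \<theta> = mat_diag (dim_row Z) (\<lambda>i. Dval Z Sig N i \<theta>)"

definition Psi :: "real mat \<Rightarrow> ((nat \<Rightarrow> real) \<Rightarrow> real mat) \<Rightarrow> (nat \<Rightarrow> nat set) \<Rightarrow> (nat \<Rightarrow> real) \<Rightarrow> real mat" where
  "Psi Z Sig N \<theta> = inv_mat (Bmat Z Sig N \<theta>) * Dmat Z Sig N \<theta> * transpose_mat (inv_mat (Bmat Z Sig N \<theta>))"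

text \<open>Fisher information of N(F, Psi~(theta)) with fixed mean F.\<close>
definition fisher_info :: "real mat \<Rightarrow> ((nat \<Rightarrow> real) \<Rightarrow> real mat) \<Rightarrow> (nat \<Rightarrow> nat set) \<Rightarrow> (nat \<Rightarrow> real) \<Rightarrow> nat \<Rightarrow> nat \<Rightarrow> real" where
  "fisher_info Z Sig N \<theta> k l = 1/2 * trace_mat
     (inv_mat (Psi Z Sig N \<theta>) * mat_partial_deriv (Psi Z Sig N) k \<theta> *
      inv_mat (Psi Z Sig N \<theta>) * mat_partial_deriv (Psi Z Sig N) l \<theta>)"

end

(*
  B is unit lower triangular, so Psi = B^-1 D B^-T has inverse B^T D^-1 B.  Differentiating
  Psi and conjugating by B^T turns Psi^-1 (dPsi/dtheta_k) into
    M_k = D^-1 dD_k - D^-1 P_k D - P_k^T,   P_k = (dB/dtheta_k) B^-1,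
  where P_k is strictly lower triangular: dB/dtheta_k is, and B^-1 is lower triangular.  In
  tr(M_k M_l) the strictly lower part of one factor only pairs with the strictly upper part of
  the other, and diagonal with diagonal; the two off-diagonal pairings both give the double sum,
  the diagonal gives sum_i D_i^-2 (dD_i/dtheta_k) (dD_i/dtheta_l).

  The derivatives exist because sigma^2 > 0 makes C positive definite: each C_N(i) is
  nonsingular, so by Cramer's rule A_i depends differentiably on theta, and D_i >= sigma^2,
  D_i being a Schur complement of C.
*)

theory Submission
  imports Defs "Jordan_Normal_Form.Determinant"
begin

lemma has_real_derivative_transfer_ev:
  assumes "\<forall>\<^sub>F t in nhds x. f t = g t" and "(g has_real_derivative D) (at x)"
  shows "(f has_real_derivative D) (at x)"
  using assms(2) DERIV_cong_ev[OF refl assms(1) refl] by blast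

lemma differentiable_transfer_ev:
  fixes f g :: "real \<Rightarrow> real"
  assumes "\<forall>\<^sub>F t in nhds x. f t = g t" and "g differentiable (at x)"
  shows "f differentiable (at x)"
  using assms has_real_derivative_transfer_ev unfolding real_differentiable_def by blast

lemma differentiable_prod:
  fixes f :: "'i \<Rightarrow> 'a::real_normed_vector \<Rightarrow> 'b::real_normed_field"
  assumes "\<And>i. i \<in> I \<Longrightarrow> f i differentiable (at x within S)"
  shows "(\<lambda>x. \<Prod>i\<in>I. f i x) differentiable (at x within S)"
proof -
  from assms obtain f' where "\<And>i. i \<in> I \<Longrightarrow> (f i has_derivative f' i) (at x within S)"
    unfolding differentiable_def by metis
  then show ?thesis
    unfolding differentiable_def by (blast intro: has_derivative_prod)
qed

lemma partial_deriv_eqI: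
  assumes "((\<lambda>t. f (\<theta>(k := t))) has_real_derivative D) (at (\<theta> k))"
  shows "partial_deriv f k \<theta> = D"
  unfolding partial_deriv_def using assms by (rule some_equality) (rule DERIV_unique[OF _ assms])

lemma has_real_derivative_partial_deriv:
  assumes "(\<lambda>t. f (\<theta>(k := t))) differentiable (at (\<theta> k))"
  shows "((\<lambda>t. f (\<theta>(k := t))) has_real_derivative partial_deriv f k \<theta>) (at (\<theta> k))"
  using assms unfolding partial_deriv_def real_differentiable_def by (rule someI_ex)

lemma index_mult_mat_sum:
  assumes "A \<in> carrier_mat nr p" "B \<in> carrier_mat p nc" "i < nr" "j < nc"
  shows "(A * B) $$ (i,j) = (\<Sum>a<p. A $$ (i,a) * B $$ (a,j))"
  using assms by (auto simp: scalar_prod_def atLeast0LessThan intro!: sum.cong)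

lemma assoc_mult_mat_dims:
  "dim_col A = dim_row B \<Longrightarrow> dim_col B = dim_row C \<Longrightarrow> (A::'a::semiring_0 mat) * B * C = A * (B * C)"
  by (rule assoc_mult_mat[of A "dim_row A" "dim_col A" B "dim_col B" C "dim_col C"]) auto

lemma add_mult_distrib_mat_dims:
  "dim_row A = dim_row B \<Longrightarrow> dim_col A = dim_col B \<Longrightarrow> dim_col A = dim_row C \<Longrightarrow>
   ((A::'a::semiring_0 mat) + B) * C = A * C + B * C"
  by (rule add_mult_distrib_mat[of A "dim_row A" "dim_col A"]) auto

lemma mult_add_distrib_mat_dims:
  "dim_row B = dim_row C \<Longrightarrow> dim_col B = dim_col C \<Longrightarrow> dim_col A = dim_row B \<Longrightarrow>
   (A::'a::semiring_0 mat) * (B + C) = A * B + A * C"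
  by (rule mult_add_distrib_mat[of A "dim_row A" "dim_col A"]) auto

lemma minus_mult_distrib_mat_dims:
  "dim_row A = dim_row B \<Longrightarrow> dim_col A = dim_col B \<Longrightarrow> dim_col A = dim_row C \<Longrightarrow>
   ((A::'a::ring mat) - B) * C = A * C - B * C"
  by (rule eq_matI) (auto simp: scalar_prod_def algebra_simps sum_subtractf)

lemma mult_minus_distrib_mat_dims:
  "dim_row B = dim_row C \<Longrightarrow> dim_col B = dim_col C \<Longrightarrow> dim_col A = dim_row B \<Longrightarrow>
   (A::'a::ring mat) * (B - C) = A * B - A * C"
  by (rule eq_matI) (auto simp: scalar_prod_def algebra_simps sum_subtractf)

lemma transpose_mult_dims:
  "dim_col A = dim_row B \<Longrightarrow> transpose_mat ((A::'a::comm_semiring_0 mat) * B) = transpose_mat B * transpose_mat A"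
  by (rule transpose_mult[of A "dim_row A" "dim_col A" B "dim_col B"]) auto

lemma transpose_minus_dims:
  "dim_row A = dim_row B \<Longrightarrow> dim_col A = dim_col B \<Longrightarrow>
   transpose_mat ((A::'a::group_add mat) - B) = transpose_mat A - transpose_mat B"
  by (rule eq_matI) auto

lemma add_uminus_mat_dims:
  "dim_row A = dim_row B \<Longrightarrow> dim_col A = dim_col B \<Longrightarrow> (A::'a::ab_group_add mat) + - B = A - B"
  by (rule eq_matI) auto

lemmas mat_dims_simps = assoc_mult_mat_dims transpose_mult_dims add_mult_distrib_mat_dims
  mult_add_distrib_mat_dims minus_mult_distrib_mat_dims mult_minus_distrib_mat_dims

lemma dim_mat_diag [simp]: "dim_row (mat_diag n f) = n" "dim_col (mat_diag n f) = n"
  unfolding mat_diag_def by simp_all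

lemma trace_mat_mult_commute:
  assumes X: "X \<in> carrier_mat n p" and Y: "Y \<in> carrier_mat p n"
  shows "trace_mat (X * Y) = trace_mat (Y * X)"
proof -
  have "trace_mat (X * Y) = (\<Sum>i<n. \<Sum>a<p. X $$ (i,a) * Y $$ (a,i))"
    unfolding trace_mat_def using X Y by (intro sum.cong refl index_mult_mat_sum[OF X Y]) auto
  also have "\<dots> = (\<Sum>a<p. \<Sum>i<n. Y $$ (a,i) * X $$ (i,a))"
    by (subst sum.swap) (simp add: mult.commute)
  also have "\<dots> = trace_mat (Y * X)"
    unfolding trace_mat_def using X Y
      by (intro sum.cong refl index_mult_mat_sum[OF Y X, symmetric]) auto
  finally show ?thesis .
qed

lemma inv_mat:
  assumes A: "A \<in> carrier_mat n n" and det: "det A \<noteq> 0"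
  shows "inv_mat A \<in> carrier_mat n n" "A * inv_mat A = 1\<^sub>m n" "inv_mat A * A = 1\<^sub>m n"
proof -
  obtain B where "mat_inverse A = Some B"
    using mat_inverse(1)[OF A] det_non_zero_imp_unit[OF A det] by fastforce
  then show "inv_mat A \<in> carrier_mat n n" "A * inv_mat A = 1\<^sub>m n" "inv_mat A * A = 1\<^sub>m n"
    using mat_inverse(2)[OF A] unfolding inv_mat_def by auto
qed

lemma inv_mat_eqI:
  assumes A: "A \<in> carrier_mat n n" and G: "G \<in> carrier_mat n n" and AG: "A * G = 1\<^sub>m n"
  shows "inv_mat A = G"
proof -
  have "det A * det G = 1"
    using det_mult[OF A G] AG by simp
  then have det: "det A \<noteq> 0" by auto
  note inv = inv_mat[OF A det]
  have "inv_mat A = inv_mat A * (A * G)" using AG inv(1) by simp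
  also have "\<dots> = (inv_mat A * A) * G" using inv(1) A G by simp
  also have "\<dots> = G" using inv(3) G by simp
  finally show ?thesis .
qed

lemma inv_mat_adj_mat:
  assumes A: "A \<in> carrier_mat n n" and det: "det A \<noteq> 0"
  shows "inv_mat A = (1 / det A) \<cdot>\<^sub>m adj_mat A"
proof (rule inv_mat_eqI[OF A])
  show "(1 / det A) \<cdot>\<^sub>m adj_mat A \<in> carrier_mat n n" using adj_mat(1)[OF A] by simp
  have "A * ((1 / det A) \<cdot>\<^sub>m adj_mat A) = (1 / det A) \<cdot>\<^sub>m (det A \<cdot>\<^sub>m 1\<^sub>m n)"
    using adj_mat[OF A] A by (simp add: mult_smult_distrib[of _ n n _ n])
  also have "\<dots> = 1\<^sub>m n" using det by (intro eq_matI) auto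
  finally show "A * ((1 / det A) \<cdot>\<^sub>m adj_mat A) = 1\<^sub>m n" .
qed

lemma det_unit_lower_triangular:
  assumes A: "A \<in> carrier_mat n n" and diag: "\<And>i. i < n \<Longrightarrow> A $$ (i,i) = 1"
    and upper: "\<And>i j. i < j \<Longrightarrow> j < n \<Longrightarrow> A $$ (i,j) = 0"
  shows "det A = 1"
proof -
  have "det A = prod_list (diag_mat A)" by (rule det_lower_triangular[OF upper A])
  also have "diag_mat A = map (\<lambda>i. 1) [0..<n]"
    unfolding diag_mat_def using A by (auto simp: diag)
  also have "prod_list (map (\<lambda>i. 1::'a) [0..<n]) = 1" by (induct n) auto
  finally show ?thesis .
qed

lemma inv_mat_unit_lower_triangular:
  assumes A: "A \<in> carrier_mat n n" and diag: "\<And>i. i < n \<Longrightarrow> A $$ (i,i) = 1"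
    and upper: "\<And>i j. i < j \<Longrightarrow> j < n \<Longrightarrow> A $$ (i,j) = 0"
    and aj: "a < j" "j < n"
  shows "inv_mat A $$ (a,j) = 0"
  using aj
proof (induction a rule: less_induct)
  case (less a)
  let ?G = "inv_mat A"
  have a: "a < n" using less by simp
  have "det A \<noteq> 0" using det_unit_lower_triangular[OF A diag upper] by simp
  note G = inv_mat[OF A this]
  have "(A * ?G) $$ (a,j) = (\<Sum>b<n. A $$ (a,b) * ?G $$ (b,j))"
    by (rule index_mult_mat_sum[OF A _ a less(3)]) (use G in simp)
  also have "\<dots> = (\<Sum>b<n. if b = a then ?G $$ (a,j) else 0)"
  proof (rule sum.cong[OF refl])
    fix b assume b: "b \<in> {..<n}"
    consider "b = a" | "b < a" | "a < b" by linarith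
    then show "A $$ (a,b) * ?G $$ (b,j) = (if b = a then ?G $$ (a,j) else 0)"
      by cases (use a b less in \<open>auto simp: diag upper\<close>)
  qed
  also have "\<dots> = ?G $$ (a,j)" using a by simp
  finally show ?case using G(2) a less by simp
qed

lemma strictly_lower_triangular_mult:
  assumes P: "P \<in> carrier_mat n n" and P0: "\<And>i j. i \<le> j \<Longrightarrow> j < n \<Longrightarrow> P $$ (i,j) = 0"
    and L: "L \<in> carrier_mat n n" and L0: "\<And>i j. i < j \<Longrightarrow> j < n \<Longrightarrow> L $$ (i,j) = 0"
    and ij: "i \<le> j" "j < n"
  shows "(P * L) $$ (i,j) = 0"
proof -
  have "(P * L) $$ (i,j) = (\<Sum>a<n. P $$ (i,a) * L $$ (a,j))"
    by (rule index_mult_mat_sum[OF P L]) (use ij in auto)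
  also have "\<dots> = 0"
  proof (rule sum.neutral, rule ballI)
    fix a assume "a \<in> {..<n}"
    then show "P $$ (i,a) * L $$ (a,j) = 0"
      using P0[of i a] L0[of a j] ij by (cases "i \<le> a") auto
  qed
  finally show ?thesis .
qed

lemma transpose_mult_self_sum_squares:
  fixes W :: "real mat"
  assumes W: "W \<in> carrier_mat n 1"
  shows "(transpose_mat W * W) $$ (0,0) = (\<Sum>j<n. (W $$ (j,0))\<^sup>2)"
proof -
  have "(transpose_mat W * W) $$ (0,0) = (\<Sum>a<n. transpose_mat W $$ (0,a) * W $$ (a,0))"
    by (rule index_mult_mat_sum) (use W in auto)
  then show ?thesis using W by (simp add: power2_eq_square)
qed

section \<open>Entrywise calculus of matrix-valued functions\<close>

text \<open>The dimensions are only required near \<open>x\<close>: \<open>inv_mat\<close> has junk dimensions at singular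
  matrices.\<close>

definition mat_differentiable :: "(real \<Rightarrow> real mat) \<Rightarrow> real \<Rightarrow> nat \<Rightarrow> nat \<Rightarrow> bool" where
  "mat_differentiable f x nr nc \<longleftrightarrow> (\<forall>\<^sub>F t in nhds x. f t \<in> carrier_mat nr nc) \<and>
     (\<forall>i<nr. \<forall>j<nc. (\<lambda>t. f t $$ (i,j)) differentiable (at x))"

definition has_mat_derivative :: "(real \<Rightarrow> real mat) \<Rightarrow> real mat \<Rightarrow> real \<Rightarrow> nat \<Rightarrow> nat \<Rightarrow> bool" where
  "has_mat_derivative f F x nr nc \<longleftrightarrow> F \<in> carrier_mat nr nc \<and>
     (\<forall>\<^sub>F t in nhds x. f t \<in> carrier_mat nr nc) \<and>
     (\<forall>i<nr. \<forall>j<nc. ((\<lambda>t. f t $$ (i,j)) has_real_derivative F $$ (i,j)) (at x))"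

lemma mat_differentiableD:
  assumes "mat_differentiable f x nr nc"
  shows "\<forall>\<^sub>F t in nhds x. f t \<in> carrier_mat nr nc"
    and "i < nr \<Longrightarrow> j < nc \<Longrightarrow> (\<lambda>t. f t $$ (i,j)) differentiable (at x)"
  using assms unfolding mat_differentiable_def by blast+

lemma has_mat_derivativeD:
  assumes "has_mat_derivative f F x nr nc"
  shows "F \<in> carrier_mat nr nc" and "\<forall>\<^sub>F t in nhds x. f t \<in> carrier_mat nr nc"
    and "f x \<in> carrier_mat nr nc"
    and "i < nr \<Longrightarrow> j < nc \<Longrightarrow> ((\<lambda>t. f t $$ (i,j)) has_real_derivative F $$ (i,j)) (at x)"
  using assms eventually_nhds_x_imp_x unfolding has_mat_derivative_def by blast+

lemma mat_differentiable_iff_has_mat_derivative: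
  "mat_differentiable f x nr nc \<longleftrightarrow> (\<exists>F. has_mat_derivative f F x nr nc)"
proof
  assume f: "mat_differentiable f x nr nc"
  define F where "F = mat nr nc (\<lambda>(i,j). SOME D. ((\<lambda>t. f t $$ (i,j)) has_real_derivative D) (at x))"
  have "has_mat_derivative f F x nr nc"
    unfolding has_mat_derivative_def
  proof (intro conjI allI impI)
    fix i j assume ij: "i < nr" "j < nc"
    have "\<exists>D. ((\<lambda>t. f t $$ (i,j)) has_real_derivative D) (at x)"
      using mat_differentiableD(2)[OF f ij] unfolding real_differentiable_def .
    then show "((\<lambda>t. f t $$ (i,j)) has_real_derivative F $$ (i,j)) (at x)"
      unfolding F_def using ij
        by (simp add: someI_ex[of "\<lambda>D. ((\<lambda>t. f t $$ (i,j)) has_real_derivative D) (at x)"])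
  qed (use mat_differentiableD(1)[OF f] in \<open>simp_all add: F_def\<close>)
  then show "\<exists>F. has_mat_derivative f F x nr nc" ..
next
  assume "\<exists>F. has_mat_derivative f F x nr nc"
  then show "mat_differentiable f x nr nc"
    unfolding has_mat_derivative_def mat_differentiable_def real_differentiable_def by blast
qed

lemma has_mat_derivative_unique:
  assumes "has_mat_derivative f F x nr nc" "has_mat_derivative f G x nr nc"
  shows "F = G"
proof (rule eq_matI)
  show "dim_row F = dim_row G" "dim_col F = dim_col G"
    using has_mat_derivativeD(1)[OF assms(1)] has_mat_derivativeD(1)[OF assms(2)] by auto
  fix i j assume "i < dim_row G" "j < dim_col G"
  then have ij: "i < nr" "j < nc" using has_mat_derivativeD(1)[OF assms(2)] by auto
  show "F $$ (i,j) = G $$ (i,j)"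
    by (rule DERIV_unique[OF has_mat_derivativeD(4)[OF assms(1) ij] has_mat_derivativeD(4)[OF assms(2) ij]])
qed

lemma has_mat_derivative_cong_ev:
  assumes f: "has_mat_derivative f F x nr nc" and fg: "\<forall>\<^sub>F t in nhds x. f t = g t"
  shows "has_mat_derivative g F x nr nc"
  unfolding has_mat_derivative_def
proof (intro conjI allI impI)
  show "\<forall>\<^sub>F t in nhds x. g t \<in> carrier_mat nr nc"
    using eventually_conj[OF has_mat_derivativeD(2)[OF f] fg] by (rule eventually_mono) auto
  fix i j assume ij: "i < nr" "j < nc"
  have "\<forall>\<^sub>F t in nhds x. g t $$ (i,j) = f t $$ (i,j)"
    using fg by (rule eventually_mono) auto
  then show "((\<lambda>t. g t $$ (i,j)) has_real_derivative F $$ (i,j)) (at x)"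
    using has_mat_derivativeD(4)[OF f ij] by (rule has_real_derivative_transfer_ev)
qed (rule has_mat_derivativeD(1)[OF f])

lemma has_mat_derivative_const: "A \<in> carrier_mat nr nc \<Longrightarrow> has_mat_derivative (\<lambda>t. A) (0\<^sub>m nr nc) x nr nc"
  unfolding has_mat_derivative_def by simp

lemma has_mat_derivative_mult:
  assumes f: "has_mat_derivative f F x nr p" and g: "has_mat_derivative g G x p nc"
  shows "has_mat_derivative (\<lambda>t. f t * g t) (F * g x + f x * G) x nr nc"
  unfolding has_mat_derivative_def
proof (intro conjI allI impI)
  note fx = has_mat_derivativeD(3)[OF f] and gx = has_mat_derivativeD(3)[OF g]
  note F = has_mat_derivativeD(1)[OF f] and G = has_mat_derivativeD(1)[OF g]
  show "F * g x + f x * G \<in> carrier_mat nr nc" using fx gx F G by simp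
  have ev: "\<forall>\<^sub>F t in nhds x. f t \<in> carrier_mat nr p \<and> g t \<in> carrier_mat p nc"
    by (rule eventually_conj[OF has_mat_derivativeD(2)[OF f] has_mat_derivativeD(2)[OF g]])
  then show "\<forall>\<^sub>F t in nhds x. f t * g t \<in> carrier_mat nr nc"
    by (rule eventually_mono) auto
  fix i j assume ij: "i < nr" "j < nc"
  have "\<forall>\<^sub>F t in nhds x. (f t * g t) $$ (i,j) = (\<Sum>a<p. f t $$ (i,a) * g t $$ (a,j))"
    using ev by (rule eventually_mono) (use ij in \<open>auto intro: index_mult_mat_sum\<close>)
  moreover have "((\<lambda>t. \<Sum>a<p. f t $$ (i,a) * g t $$ (a,j)) has_real_derivative
      (\<Sum>a<p. F $$ (i,a) * g x $$ (a,j) + G $$ (a,j) * f x $$ (i,a))) (at x)"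
    by (rule DERIV_sum, rule DERIV_mult)
      (use ij in \<open>auto intro: has_mat_derivativeD(4)[OF f] has_mat_derivativeD(4)[OF g]\<close>)
  ultimately have "((\<lambda>t. (f t * g t) $$ (i,j)) has_real_derivative
      (\<Sum>a<p. F $$ (i,a) * g x $$ (a,j) + G $$ (a,j) * f x $$ (i,a))) (at x)"
    by (rule has_real_derivative_transfer_ev)
  moreover have "(\<Sum>a<p. F $$ (i,a) * g x $$ (a,j) + G $$ (a,j) * f x $$ (i,a)) = (F * g x + f x * G) $$ (i,j)"
    using ij fx gx F G
    by (simp add: index_mult_mat_sum[OF F gx ij] index_mult_mat_sum[OF fx G ij] sum.distrib mult.commute)
  ultimately show "((\<lambda>t. (f t * g t) $$ (i,j)) has_real_derivative (F * g x + f x * G) $$ (i,j)) (at x)"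
    by simp
qed

lemma has_mat_derivative_transpose:
  assumes f: "has_mat_derivative f F x nr nc"
  shows "has_mat_derivative (\<lambda>t. transpose_mat (f t)) (transpose_mat F) x nc nr"
  unfolding has_mat_derivative_def
proof (intro conjI allI impI)
  show "transpose_mat F \<in> carrier_mat nc nr" using has_mat_derivativeD(1)[OF f] by simp
  show "\<forall>\<^sub>F t in nhds x. transpose_mat (f t) \<in> carrier_mat nc nr"
    using has_mat_derivativeD(2)[OF f] by (rule eventually_mono) simp
  fix i j assume ij: "i < nc" "j < nr"
  have "\<forall>\<^sub>F t in nhds x. transpose_mat (f t) $$ (i,j) = f t $$ (j,i)"
    using has_mat_derivativeD(2)[OF f] by (rule eventually_mono) (use ij in simp)
  then have "((\<lambda>t. transpose_mat (f t) $$ (i,j)) has_real_derivative F $$ (j,i)) (at x)"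
    using has_mat_derivativeD(4)[OF f ij(2) ij(1)] by (rule has_real_derivative_transfer_ev)
  then show "((\<lambda>t. transpose_mat (f t) $$ (i,j)) has_real_derivative transpose_mat F $$ (i,j)) (at x)"
    using has_mat_derivativeD(1)[OF f] ij by simp
qed

lemma mat_differentiable_const: "A \<in> carrier_mat nr nc \<Longrightarrow> mat_differentiable (\<lambda>t. A) x nr nc"
  unfolding mat_differentiable_def by simp

lemma mat_differentiable_mult:
  "mat_differentiable f x nr p \<Longrightarrow> mat_differentiable g x p nc \<Longrightarrow>
   mat_differentiable (\<lambda>t. f t * g t) x nr nc"
  unfolding mat_differentiable_iff_has_mat_derivative by (blast intro: has_mat_derivative_mult)

lemma mat_differentiable_mat:
  "(\<And>i j. i < nr \<Longrightarrow> j < nc \<Longrightarrow> (\<lambda>t. h t i j) differentiable (at x)) \<Longrightarrow>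
   mat_differentiable (\<lambda>t. mat nr nc (\<lambda>(i,j). h t i j)) x nr nc"
  unfolding mat_differentiable_def by simp

lemma mat_differentiable_add:
  assumes f: "mat_differentiable f x nr nc" and g: "mat_differentiable g x nr nc"
  shows "mat_differentiable (\<lambda>t. f t + g t) x nr nc"
  unfolding mat_differentiable_def
proof (intro conjI allI impI)
  have ev: "\<forall>\<^sub>F t in nhds x. f t \<in> carrier_mat nr nc \<and> g t \<in> carrier_mat nr nc"
    by (rule eventually_conj[OF mat_differentiableD(1)[OF f] mat_differentiableD(1)[OF g]])
  then show "\<forall>\<^sub>F t in nhds x. f t + g t \<in> carrier_mat nr nc"
    by (rule eventually_mono) auto
  fix i j assume ij: "i < nr" "j < nc"
  have "\<forall>\<^sub>F t in nhds x. (f t + g t) $$ (i,j) = f t $$ (i,j) + g t $$ (i,j)"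
    using ev by (rule eventually_mono) (use ij in auto)
  moreover have "(\<lambda>t. f t $$ (i,j) + g t $$ (i,j)) differentiable (at x)"
    using mat_differentiableD(2)[OF f ij] mat_differentiableD(2)[OF g ij]
      by (rule differentiable_add)
  ultimately show "(\<lambda>t. (f t + g t) $$ (i,j)) differentiable (at x)"
    by (rule differentiable_transfer_ev)
qed

lemma mat_differentiable_smult:
  assumes c: "c differentiable (at x)" and f: "mat_differentiable f x nr nc"
  shows "mat_differentiable (\<lambda>t. c t \<cdot>\<^sub>m f t) x nr nc"
  unfolding mat_differentiable_def
proof (intro conjI allI impI)
  show "\<forall>\<^sub>F t in nhds x. c t \<cdot>\<^sub>m f t \<in> carrier_mat nr nc"
    using mat_differentiableD(1)[OF f] by (rule eventually_mono) simp
  fix i j assume ij: "i < nr" "j < nc"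
  have "\<forall>\<^sub>F t in nhds x. (c t \<cdot>\<^sub>m f t) $$ (i,j) = c t * f t $$ (i,j)"
    using mat_differentiableD(1)[OF f] by (rule eventually_mono) (use ij in simp)
  then show "(\<lambda>t. (c t \<cdot>\<^sub>m f t) $$ (i,j)) differentiable (at x)"
    using differentiable_mult[OF c mat_differentiableD(2)[OF f ij]]
      by (rule differentiable_transfer_ev)
qed

lemma mat_differentiable_submatrix:
  assumes f: "mat_differentiable f x nr nc"
  shows "mat_differentiable (\<lambda>t. submatrix (f t) I J) x
    (card {i. i < nr \<and> i \<in> I}) (card {j. j < nc \<and> j \<in> J})"
  unfolding mat_differentiable_def
proof (intro conjI allI impI)
  show "\<forall>\<^sub>F t in nhds x. submatrix (f t) I J \<in> carrier_mat (card {i. i<nr \<and> i\<in>I}) (card {j. j<nc \<and> j\<in>J})"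
    using mat_differentiableD(1)[OF f] by (rule eventually_mono) (auto simp: dim_submatrix)
  fix i j assume ij: "i < card {i. i<nr \<and> i\<in>I}" "j < card {j. j<nc \<and> j\<in>J}"
  have "\<forall>\<^sub>F t in nhds x. submatrix (f t) I J $$ (i,j) = f t $$ (pick I i, pick J j)"
    using mat_differentiableD(1)[OF f]
      by (rule eventually_mono) (use ij in \<open>auto intro: submatrix_index\<close>)
  moreover have "(\<lambda>t. f t $$ (pick I i, pick J j)) differentiable (at x)"
    using mat_differentiableD(2)[OF f pick_le[OF ij(1)] pick_le[OF ij(2)]] .
  ultimately show "(\<lambda>t. submatrix (f t) I J $$ (i,j)) differentiable (at x)"
    by (rule differentiable_transfer_ev)
qed

lemma mat_differentiable_mat_delete:
  assumes f: "mat_differentiable f x n n"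
  shows "mat_differentiable (\<lambda>t. mat_delete (f t) a b) x (n - 1) (n - 1)"
  unfolding mat_differentiable_def
proof (intro conjI allI impI)
  show "\<forall>\<^sub>F t in nhds x. mat_delete (f t) a b \<in> carrier_mat (n - 1) (n - 1)"
    using mat_differentiableD(1)[OF f] by (rule eventually_mono) (rule mat_delete_carrier)
  fix i j assume ij: "i < n - 1" "j < n - 1"
  let ?i = "if i < a then i else Suc i" and ?j = "if j < b then j else Suc j"
  have "\<forall>\<^sub>F t in nhds x. mat_delete (f t) a b $$ (i,j) = f t $$ (?i, ?j)"
    using mat_differentiableD(1)[OF f]
      by (rule eventually_mono) (use ij in \<open>simp add: mat_delete_def\<close>)
  moreover have "(\<lambda>t. f t $$ (?i, ?j)) differentiable (at x)"
    by (rule mat_differentiableD(2)[OF f]) (use ij in auto)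
  ultimately show "(\<lambda>t. mat_delete (f t) a b $$ (i,j)) differentiable (at x)"
    by (rule differentiable_transfer_ev)
qed

lemma det_differentiable:
  assumes f: "mat_differentiable f x n n"
  shows "(\<lambda>t. det (f t)) differentiable (at x)"
proof (rule differentiable_transfer_ev)
  show "\<forall>\<^sub>F t in nhds x. det (f t) =
      (\<Sum>p \<in> {p. p permutes {0..<n}}. signof p * (\<Prod>i = 0..<n. f t $$ (i, p i)))"
    using mat_differentiableD(1)[OF f] by (rule eventually_mono) (rule det_def')
  have "(\<lambda>t. \<Prod>i = 0..<n. f t $$ (i, p i)) differentiable (at x)" if "p permutes {0..<n}" for p
    using permutes_in_image[OF that]
      by (intro differentiable_prod mat_differentiableD(2)[OF f]) auto
  then show "(\<lambda>t. \<Sum>p \<in> {p. p permutes {0..<n}}. signof p * (\<Prod>i = 0..<n. f t $$ (i, p i)))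
      differentiable (at x)"
    by (intro differentiable_sum) (auto simp: finite_permutations)
qed

text \<open>Cramer's rule reduces the entries of the inverse to quotients of determinants.\<close>

lemma mat_differentiable_inv_mat:
  assumes f: "mat_differentiable f x n n" and det: "\<forall>\<^sub>F t in nhds x. det (f t) \<noteq> 0"
  shows "mat_differentiable (\<lambda>t. inv_mat (f t)) x n n"
  unfolding mat_differentiable_def
proof (intro conjI allI impI)
  have ev: "\<forall>\<^sub>F t in nhds x. f t \<in> carrier_mat n n \<and> det (f t) \<noteq> 0"
    using mat_differentiableD(1)[OF f] det by (rule eventually_conj)
  then show "\<forall>\<^sub>F t in nhds x. inv_mat (f t) \<in> carrier_mat n n"
    by (rule eventually_mono) (use inv_mat(1) in blast)
  fix i j assume ij: "i < n" "j < n"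
  have "\<forall>\<^sub>F t in nhds x. inv_mat (f t) $$ (i,j) = 1 / det (f t) * ((-1)^(j+i) * det (mat_delete (f t) j i))"
    using ev by (rule eventually_mono) (use ij in \<open>auto simp: inv_mat_adj_mat adj_mat_def cofactor_def\<close>)
  moreover have "(\<lambda>t. 1 / det (f t) * ((-1)^(j+i) * det (mat_delete (f t) j i))) differentiable (at x)"
    using eventually_nhds_x_imp_x[OF det]
    by (intro differentiable_mult differentiable_divide differentiable_const
        det_differentiable[OF f] det_differentiable[OF mat_differentiable_mat_delete[OF f]])
  ultimately show "(\<lambda>t. inv_mat (f t) $$ (i,j)) differentiable (at x)"
    by (rule differentiable_transfer_ev)
qed

text \<open>Once the inverse is known to be differentiable, its derivative is read off from
  differentiating \<open>f t * inv_mat (f t) = 1\<close>.\<close>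

lemma has_mat_derivative_inv_mat:
  assumes f: "has_mat_derivative f F x n n" and det: "\<forall>\<^sub>F t in nhds x. det (f t) \<noteq> 0"
  shows "has_mat_derivative (\<lambda>t. inv_mat (f t)) (- (inv_mat (f x) * F * inv_mat (f x))) x n n"
proof -
  let ?G = "\<lambda>t. inv_mat (f t)"
  have "mat_differentiable ?G x n n"
    using mat_differentiable_inv_mat det f mat_differentiable_iff_has_mat_derivative by blast
  then obtain G' where G': "has_mat_derivative ?G G' x n n"
    unfolding mat_differentiable_iff_has_mat_derivative by blast
  note fx = has_mat_derivativeD(3)[OF f] and F = has_mat_derivativeD(1)[OF f]
    and G'c = has_mat_derivativeD(1)[OF G']
  note Gx = inv_mat[OF fx eventually_nhds_x_imp_x[OF det]]
  have "\<forall>\<^sub>F t in nhds x. f t * ?G t = 1\<^sub>m n"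
    using eventually_conj[OF has_mat_derivativeD(2)[OF f] det]
      by (rule eventually_mono) (use inv_mat in blast)
  with has_mat_derivative_mult[OF f G'] have "has_mat_derivative (\<lambda>t. 1\<^sub>m n) (F * ?G x + f x * G') x n n"
    by (rule has_mat_derivative_cong_ev)
  then have sum0: "F * ?G x + f x * G' = 0\<^sub>m n n"
    by (rule has_mat_derivative_unique[OF _ has_mat_derivative_const]) simp
  have fG': "f x * G' = - (F * ?G x)"
  proof (rule eq_matI)
    fix i j assume "i < dim_row (- (F * ?G x))" "j < dim_col (- (F * ?G x))"
    then have ij: "i < n" "j < n" using F Gx by auto
    then have "(F * ?G x + f x * G') $$ (i,j) = 0" using sum0 by simp
    then show "(f x * G') $$ (i,j) = (- (F * ?G x)) $$ (i,j)" using ij F Gx fx G'c by simp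
  qed (use F Gx fx G'c in auto)
  have "G' = (?G x * f x) * G'" by (simp only: Gx(3) left_mult_one_mat[OF G'c])
  also have "\<dots> = ?G x * (f x * G')" by (rule assoc_mult_mat[OF Gx(1) fx G'c])
  also have "\<dots> = - (?G x * F * ?G x)" unfolding fG' using Gx F by simp
  finally show ?thesis using G' by simp
qed

lemma mat_partial_deriv_eqI:
  assumes "has_mat_derivative (\<lambda>t. M (\<theta>(k := t))) F (\<theta> k) nr nc" and "M \<theta> \<in> carrier_mat nr nc"
  shows "mat_partial_deriv M k \<theta> = F"
proof (rule eq_matI)
  note F = has_mat_derivativeD(1)[OF assms(1)]
  show "dim_row (mat_partial_deriv M k \<theta>) = dim_row F" "dim_col (mat_partial_deriv M k \<theta>) = dim_col F"
    using assms(2) F by (auto simp: mat_partial_deriv_def)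
  fix i j assume "i < dim_row F" "j < dim_col F"
  then have ij: "i < nr" "j < nc" using F by auto
  have "partial_deriv (\<lambda>\<theta>'. M \<theta>' $$ (i,j)) k \<theta> = F $$ (i,j)"
    by (rule partial_deriv_eqI) (use has_mat_derivativeD(4)[OF assms(1) ij] in simp)
  then show "mat_partial_deriv M k \<theta> $$ (i,j) = F $$ (i,j)"
    using assms(2) ij by (simp add: mat_partial_deriv_def)
qed

section \<open>Submatrices as products with selection matrices\<close>

definition select_mat :: "nat \<Rightarrow> nat set \<Rightarrow> 'a::comm_semiring_1 mat" where
  "select_mat n S = mat n (card {j. j < n \<and> j \<in> S}) (\<lambda>(j,b). if j = pick S b then 1 else 0)"

lemma dim_select_mat [simp]:
  "dim_row (select_mat n S) = n" "dim_col (select_mat n S) = card {j. j < n \<and> j \<in> S}"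
  unfolding select_mat_def by simp_all

lemma select_mat_carrier: "select_mat n S \<in> carrier_mat n (card {j. j < n \<and> j \<in> S})"
  by (simp add: carrier_matI)

lemma index_select_mat:
  "j < n \<Longrightarrow> b < card {j. j < n \<and> j \<in> S} \<Longrightarrow> select_mat n S $$ (j,b) = (if j = pick S b then 1 else 0)"
  unfolding select_mat_def by simp

lemma submatrix_eq_select_mat:
  fixes M :: "'a::comm_semiring_1 mat"
  assumes M: "M \<in> carrier_mat nr nc"
  shows "transpose_mat (select_mat nr I) * M * select_mat nc J = submatrix M I J"
proof (rule eq_matI)
  let ?c = "card {j. j < nr \<and> j \<in> I}" and ?d = "card {j. j < nc \<and> j \<in> J}"
  let ?EI = "select_mat nr I :: 'a mat" and ?EJ = "select_mat nc J :: 'a mat"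
  have EI: "transpose_mat ?EI \<in> carrier_mat ?c nr" and EJ: "?EJ \<in> carrier_mat nc ?d"
    using select_mat_carrier by auto
  show "dim_row (transpose_mat ?EI * M * ?EJ) = dim_row (submatrix M I J)"
       "dim_col (transpose_mat ?EI * M * ?EJ) = dim_col (submatrix M I J)"
    using EI EJ M by (auto simp: dim_submatrix)
  fix a b assume "a < dim_row (submatrix M I J)" "b < dim_col (submatrix M I J)"
  then have ab: "a < ?c" "b < ?d" using M by (auto simp: dim_submatrix)
  have pa: "pick I a < nr" and pb: "pick J b < nc" using pick_le ab by auto
  have EIM: "(transpose_mat ?EI * M) $$ (a,l) = M $$ (pick I a, l)" if l: "l < nc" for l
  proof -
    have "(transpose_mat ?EI * M) $$ (a,l) = (\<Sum>j<nr. transpose_mat ?EI $$ (a,j) * M $$ (j,l))"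
      by (rule index_mult_mat_sum[OF EI M ab(1) l])
    also have "\<dots> = (\<Sum>j<nr. if j = pick I a then M $$ (j,l) else 0)"
      using ab by (intro sum.cong) (auto simp: index_select_mat)
    finally show ?thesis using pa by simp
  qed
  have "(transpose_mat ?EI * M * ?EJ) $$ (a,b) = (\<Sum>l<nc. (transpose_mat ?EI * M) $$ (a,l) * ?EJ $$ (l,b))"
    by (rule index_mult_mat_sum[OF _ EJ ab]) (use EI M in simp)
  also have "\<dots> = (\<Sum>l<nc. (if l = pick J b then M $$ (pick I a, l) else 0))"
    using ab by (intro sum.cong) (auto simp: index_select_mat EIM)
  also have "\<dots> = submatrix M I J $$ (a,b)" using ab M pb by (simp add: submatrix_index)
  finally show "(transpose_mat ?EI * M * ?EJ) $$ (a,b) = submatrix M I J $$ (a,b)" .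
qed

lemma pick_inj:
  assumes "a < card {j. j < n \<and> j \<in> S}" "b < card {j. j < n \<and> j \<in> S}" "pick S a = pick S b"
  shows "a = b"
proof -
  let ?S = "{j. j < n \<and> j \<in> S}"
  have "a = card {x \<in> ?S. x < pick ?S a}" "b = card {x \<in> ?S. x < pick ?S b}"
    using card_pick[of a ?S] card_pick[of b ?S] assms(1,2) by auto
  then show ?thesis using assms pick_reduce_set by metis
qed

lemma card_singleton_less: "i < n \<Longrightarrow> card {j. j < n \<and> j \<in> {i}} = 1"
proof -
  assume "i < n"
  then have "{j. j < n \<and> j \<in> {i}} = {i}" by auto
  then show ?thesis by simp
qed

lemma Least_eq_self: "(LEAST a::'a::order. a = i) = i"
  by (rule Least_equality) auto

lemma transpose_select_mat_mult_self:
  "transpose_mat (select_mat n S) * select_mat n S = (1\<^sub>m (card {j. j < n \<and> j \<in> S}) :: 'a::comm_semiring_1 mat)"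
proof -
  have Et: "transpose_mat (select_mat n S :: 'a mat) \<in> carrier_mat (card {j. j < n \<and> j \<in> S}) n"
    using select_mat_carrier[of n S] by simp
  have "transpose_mat (select_mat n S) * select_mat n S =
      transpose_mat (select_mat n S) * 1\<^sub>m n * (select_mat n S :: 'a mat)"
    by (simp add: right_mult_one_mat[OF Et])
  also have "\<dots> = submatrix (1\<^sub>m n) S S" by (rule submatrix_eq_select_mat) simp
  also have "\<dots> = 1\<^sub>m (card {j. j < n \<and> j \<in> S})"
  proof (rule eq_matI)
    fix a b assume "a < dim_row (1\<^sub>m (card {j. j<n \<and> j\<in>S}) :: 'a mat)"
      "b < dim_col (1\<^sub>m (card {j. j<n \<and> j\<in>S}) :: 'a mat)"
    then have ab: "a < card {j. j<n \<and> j\<in>S}" "b < card {j. j<n \<and> j\<in>S}" by auto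
    then have "pick S a = pick S b \<longleftrightarrow> a = b" using pick_inj by blast
    then show "submatrix (1\<^sub>m n) S S $$ (a,b) = (1\<^sub>m (card {j. j<n \<and> j\<in>S}) :: 'a mat) $$ (a,b)"
      using ab pick_le by (simp add: submatrix_index)
  qed (auto simp: dim_submatrix)
  finally show ?thesis .
qed

text \<open>The same identities with the products associated to the right, as produced by
  simplification.\<close>

lemma submatrix_eq_select_mat_assoc:
  fixes M :: "'a::comm_semiring_1 mat"
  assumes M: "dim_row M = nr" "dim_col M = nc"
  shows "transpose_mat (select_mat nr I) * (M * select_mat nc J) = submatrix M I J"
    and "dim_row X = card {j. j < nc \<and> j \<in> J} \<Longrightarrow>
      transpose_mat (select_mat nr I) * (M * (select_mat nc J * X)) = submatrix M I J * X"
proof -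
  note sub = submatrix_eq_select_mat[OF carrier_matI[OF M], of I J]
  show "transpose_mat (select_mat nr I) * (M * select_mat nc J) = submatrix M I J"
    using M by (simp add: sub[symmetric] assoc_mult_mat_dims)
  assume "dim_row X = card {j. j < nc \<and> j \<in> J}"
  then show "transpose_mat (select_mat nr I) * (M * (select_mat nc J * X)) = submatrix M I J * X"
    using M by (simp add: sub[symmetric] assoc_mult_mat_dims)
qed

lemma transpose_select_mat_mult_self_assoc:
  "dim_row X = card {j. j < n \<and> j \<in> S} \<Longrightarrow> transpose_mat (select_mat n S) * (select_mat n S * X) = X"
  by (simp add: assoc_mult_mat_dims[symmetric] transpose_select_mat_mult_self)

lemma eventually_noise_pos:
  fixes \<theta> :: "nat \<Rightarrow> real"
  assumes "\<theta> 0 > 0"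
  shows "\<forall>\<^sub>F t in nhds (\<theta> k). (\<theta>(k := t)) 0 > 0"
proof (cases "k = 0")
  case True
  have "\<forall>\<^sub>F t in nhds (\<theta> k). t \<in> {0<..}"
    using assms True by (intro eventually_nhds_in_open) auto
  then show ?thesis using True by (auto elim: eventually_mono)
qed (use assms in simp)

locale vecchia =
  fixes n m q :: nat and Z :: "real mat" and Sig :: "(nat \<Rightarrow> real) \<Rightarrow> real mat"
    and N :: "nat \<Rightarrow> nat set"
  assumes Z: "Z \<in> carrier_mat n m"
    and Sig_dep: "\<And>\<theta>1 \<theta>2. (\<forall>j\<in>{1..<q}. \<theta>1 j = \<theta>2 j) \<Longrightarrow> Sig \<theta>1 = Sig \<theta>2"
    and Sig_cov: "\<And>\<theta>'. covariance_mat m (Sig \<theta>')"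
    and Sig_diff: "\<And>\<theta>' j a b. j \<in> {1..<q} \<Longrightarrow> a < m \<Longrightarrow> b < m \<Longrightarrow>
                      has_partial_deriv_at (\<lambda>\<theta>''. Sig \<theta>'' $$ (a,b)) j \<theta>'"
    and N: "\<And>i. i < n \<Longrightarrow> N i \<subseteq> {..<i}"
begin

lemma Sig_carrier: "Sig \<theta> \<in> carrier_mat m m"
  using Sig_cov unfolding covariance_mat_def by blast

lemma ZSZ_carrier: "ZSZ Z Sig \<theta> \<in> carrier_mat n n"
  unfolding ZSZ_def using Z Sig_carrier by auto

lemma Cmat_carrier: "Cmat Z Sig \<theta> \<in> carrier_mat n n"
  unfolding Cmat_def using ZSZ_carrier Z by auto

lemma dim_ZSZ_Cmat [simp]:
  "dim_row (ZSZ Z Sig \<theta>) = n" "dim_col (ZSZ Z Sig \<theta>) = n"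
  "dim_row (Cmat Z Sig \<theta>) = n" "dim_col (Cmat Z Sig \<theta>) = n"
  using ZSZ_carrier Cmat_carrier by auto

lemma index_Cmat:
  "j < n \<Longrightarrow> l < n \<Longrightarrow> Cmat Z Sig \<theta> $$ (j,l) = ZSZ Z Sig \<theta> $$ (j,l) + (if j = l then \<theta> 0 else 0)"
  unfolding Cmat_def using Z by simp

lemma ZSZ_quadratic_form_nonneg:
  assumes W: "W \<in> carrier_mat n 1"
  shows "0 \<le> (transpose_mat W * ZSZ Z Sig \<theta> * W) $$ (0,0)"
proof -
  define U where "U = transpose_mat Z * W"
  have U: "U \<in> carrier_mat m 1" unfolding U_def using Z W by simp
  have "transpose_mat W * ZSZ Z Sig \<theta> * W = transpose_mat U * (Sig \<theta> * U)"
    unfolding ZSZ_def U_def using carrier_matD[OF Z] carrier_matD[OF Sig_carrier] W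
    by (simp add: transpose_mult_dims assoc_mult_mat_dims)
  also have "(transpose_mat U * (Sig \<theta> * U)) $$ (0,0) = row (transpose_mat U) 0 \<bullet> col (Sig \<theta> * U) 0"
    using U Sig_carrier[of \<theta>] by (intro index_mult_mat(1)) auto
  also have "\<dots> = col U 0 \<bullet> (Sig \<theta> *\<^sub>v col U 0)"
    using U by (simp add: row_transpose col_mult2[OF Sig_carrier U])
  also have "\<dots> \<ge> 0"
  proof -
    have "col U 0 \<in> carrier_vec m" using U unfolding carrier_vec_def by simp
    then show ?thesis using Sig_cov[of \<theta>] unfolding covariance_mat_def by blast
  qed
  finally show ?thesis .
qed

lemma Cmat_quadratic_form_ge:
  assumes W: "W \<in> carrier_mat n 1"
  shows "\<theta> 0 * (transpose_mat W * W) $$ (0,0) \<le> (transpose_mat W * Cmat Z Sig \<theta> * W) $$ (0,0)"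
proof -
  have "transpose_mat W * Cmat Z Sig \<theta> * W = transpose_mat W * ZSZ Z Sig \<theta> * W + \<theta> 0 \<cdot>\<^sub>m (transpose_mat W * W)"
    unfolding Cmat_def using W ZSZ_carrier Z
    by (simp add: mult_add_distrib_mat_dims add_mult_distrib_mat_dims carrier_matD
        mult_smult_distrib[of "transpose_mat W" 1 n "1\<^sub>m n" n] mult_smult_assoc_mat[of "transpose_mat W" 1 n W 1])
  then show ?thesis using ZSZ_quadratic_form_nonneg[OF W, of \<theta>] W by simp
qed

lemma det_submatrix_Cmat_nonzero:
  assumes pos: "\<theta> 0 > 0"
  shows "det (submatrix (Cmat Z Sig \<theta>) S S) \<noteq> 0"
proof
  let ?C = "Cmat Z Sig \<theta>" and ?c = "card {j. j < n \<and> j \<in> S}" and ?E = "select_mat n S :: real mat"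
  let ?CS = "submatrix ?C S S"
  have CS: "?CS \<in> carrier_mat ?c ?c" by (simp add: carrier_matI dim_submatrix)
  assume "det ?CS = 0"
  then obtain v where v: "v \<in> carrier_vec ?c" "v \<noteq> 0\<^sub>v ?c" "?CS *\<^sub>v v = 0\<^sub>v ?c"
    using det_0_iff_vec_prod_zero[OF CS] by blast
  define V where "V = mat ?c 1 (\<lambda>(b,_). v $ b)"
  have V: "V \<in> carrier_mat ?c 1" unfolding V_def by simp
  have colV: "col V 0 = v" unfolding V_def using v(1) by (intro eq_vecI) auto
  have "row ?CS b \<bullet> v = 0" if "b < ?c" for b
    using arg_cong[OF v(3), of "\<lambda>w. w $ b"] that CS by simp
  then have CSV: "?CS * V = 0\<^sub>m ?c 1"
    using CS V by (intro eq_matI) (auto simp: colV)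
  define W where "W = ?E * V"
  have W: "W \<in> carrier_mat n 1" unfolding W_def carrier_mat_def using V by simp
  have "transpose_mat W * ?C * W = transpose_mat V * (?CS * V)"
    unfolding W_def using V
    by (simp add: transpose_mult_dims assoc_mult_mat_dims submatrix_eq_select_mat_assoc carrier_matD)
  then have C0: "(transpose_mat W * ?C * W) $$ (0,0) = 0" using CSV V by simp
  obtain b where b: "b < ?c" "v $ b \<noteq> 0"
    using v(1,2) by (metis eq_vecI carrier_vecD index_zero_vec)
  have "transpose_mat W * W = transpose_mat V * V"
    unfolding W_def using V
    by (simp add: transpose_mult_dims assoc_mult_mat_dims transpose_select_mat_mult_self_assoc carrier_matD)
  then have "(transpose_mat W * W) $$ (0,0) = (\<Sum>b<?c. (v $ b)\<^sup>2)"
    using transpose_mult_self_sum_squares[OF V] V unfolding V_def by simp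
  also have "\<dots> > 0"
    using b by (intro sum_pos2[of _ b]) auto
  finally show False
    using Cmat_quadratic_form_ge[OF W, of \<theta>] C0 pos by (smt (verit) mult_pos_pos)
qed

lemma pick_neighbours_less: "i < n \<Longrightarrow> b < card {j. j < n \<and> j \<in> N i} \<Longrightarrow> pick (N i) b < i"
proof -
  assume i: "i < n" and b: "b < card {j. j < n \<and> j \<in> N i}"
  have "{j. j < n \<and> j \<in> N i} = {j. j < i \<and> j \<in> N i}" using N[OF i] i by auto
  then show ?thesis using pick_le[of b i "N i"] b by simp
qed

text \<open>Off the diagonal \<open>C\<close> and \<open>Z \<Sigma> Z\<^sup>T\<close> agree, and \<open>i \<notin> N i\<close>.\<close>

lemma submatrix_Cmat_neighbours:
  assumes i: "i < n"
  shows "submatrix (Cmat Z Sig \<theta>) {i} (N i) = submatrix (ZSZ Z Sig \<theta>) {i} (N i)"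
    and "submatrix (Cmat Z Sig \<theta>) (N i) {i} = submatrix (ZSZ Z Sig \<theta>) (N i) {i}"
proof -
  have "Cmat Z Sig \<theta> $$ (i,j) = ZSZ Z Sig \<theta> $$ (i,j)" "Cmat Z Sig \<theta> $$ (j,i) = ZSZ Z Sig \<theta> $$ (j,i)"
    if "j < i" for j
    using that i by (simp_all add: index_Cmat)
  then show "submatrix (Cmat Z Sig \<theta>) {i} (N i) = submatrix (ZSZ Z Sig \<theta>) {i} (N i)"
    and "submatrix (Cmat Z Sig \<theta>) (N i) {i} = submatrix (ZSZ Z Sig \<theta>) (N i) {i}"
    using i card_singleton_less[OF i] pick_neighbours_less[OF i]
    by (auto intro!: eq_matI simp: dim_submatrix submatrix_index Least_eq_self)
qed

lemma Avec_carrier: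
  assumes i: "i < n" and pos: "\<theta> 0 > 0"
  shows "Avec Z Sig N i \<theta> \<in> carrier_mat 1 (card {j. j < n \<and> j \<in> N i})"
proof -
  let ?CS = "submatrix (Cmat Z Sig \<theta>) (N i) (N i)" and ?c = "card {j. j < n \<and> j \<in> N i}"
  have "?CS \<in> carrier_mat ?c ?c" by (simp add: carrier_matI dim_submatrix)
  then have "inv_mat ?CS \<in> carrier_mat ?c ?c"
    using inv_mat(1) det_submatrix_Cmat_nonzero[where \<theta>=\<theta>, OF pos] by blast
  then show ?thesis
    unfolding Avec_def carrier_mat_def using card_singleton_less[OF i] by (simp add: dim_submatrix)
qed

lemma Avec_mult_submatrix_Cmat:
  assumes i: "i < n" and pos: "\<theta> 0 > 0"
    and X: "X \<in> carrier_mat (card {j. j < n \<and> j \<in> N i}) nc"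
  shows "Avec Z Sig N i \<theta> * (submatrix (Cmat Z Sig \<theta>) (N i) (N i) * X) =
    submatrix (ZSZ Z Sig \<theta>) {i} (N i) * X"
proof -
  let ?CS = "submatrix (Cmat Z Sig \<theta>) (N i) (N i)" and ?c = "card {j. j < n \<and> j \<in> N i}"
  let ?r = "submatrix (ZSZ Z Sig \<theta>) {i} (N i)"
  have CS: "?CS \<in> carrier_mat ?c ?c" by (simp add: carrier_matI dim_submatrix)
  note CSi = inv_mat[OF CS det_submatrix_Cmat_nonzero[where \<theta>=\<theta>, OF pos]]
  have r: "?r \<in> carrier_mat 1 ?c"
    unfolding carrier_mat_def using card_singleton_less[OF i] by (simp add: dim_submatrix)
  have "Avec Z Sig N i \<theta> * (?CS * X) = ?r * (inv_mat ?CS * (?CS * X))"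
    unfolding Avec_def using mult_carrier_mat[OF CS X] by (rule assoc_mult_mat[OF r CSi(1)])
  also have "inv_mat ?CS * (?CS * X) = X"
    using CSi(1,3) CS X by (simp add: assoc_mult_mat[symmetric])
  finally show ?thesis .
qed

text \<open>\<open>D\<^sub>i\<close> is a Schur complement of \<open>C\<close>, hence a value of its quadratic form.\<close>

lemma Dval_quadratic_form:
  assumes i: "i < n" and pos: "\<theta> 0 > 0"
  defines "W \<equiv> select_mat n {i} - select_mat n (N i) * transpose_mat (Avec Z Sig N i \<theta>)"
  shows "W \<in> carrier_mat n 1" and "W $$ (i,0) = 1"
    and "(transpose_mat W * Cmat Z Sig \<theta> * W) $$ (0,0) = Dval Z Sig N i \<theta>"
proof -
  let ?C = "Cmat Z Sig \<theta>" and ?K = "ZSZ Z Sig \<theta>" and ?c = "card {j. j < n \<and> j \<in> N i}"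
  let ?E = "select_mat n (N i) :: real mat" and ?A = "Avec Z Sig N i \<theta>"
  have c1: "card {j. j < n \<and> j \<in> {i}} = 1" by (rule card_singleton_less[OF i])
  note A = Avec_carrier[of i \<theta>, OF i pos] and A_CS = Avec_mult_submatrix_Cmat[of i \<theta>, OF i pos]
  show "W \<in> carrier_mat n 1"
    unfolding W_def using A
      by (intro minus_carrier_mat mult_carrier_mat[OF select_mat_carrier]) simp
  have "(?E * transpose_mat ?A) $$ (i,0) = (\<Sum>b<?c. ?E $$ (i,b) * transpose_mat ?A $$ (b,0))"
    by (rule index_mult_mat_sum[OF select_mat_carrier _ i]) (use A in auto)
  also have "\<dots> = 0"
  proof (intro sum.neutral ballI)
    fix b assume b: "b \<in> {..<?c}"
    then have "pick (N i) b \<noteq> i" using pick_neighbours_less[OF i] by fastforce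
    then show "?E $$ (i,b) * transpose_mat ?A $$ (b,0) = 0" using i b
      by (simp add: index_select_mat)
  qed
  finally show "W $$ (i,0) = 1" unfolding W_def using i A c1
    by (simp add: index_select_mat Least_eq_self)
  have "(transpose_mat W * ?C * W) $$ (0,0) = ?C $$ (i,i) - (?A * submatrix ?K (N i) {i}) $$ (0,0)"
    unfolding W_def using A c1
    by (simp add: transpose_minus_dims transpose_mult_dims minus_mult_distrib_mat_dims
        mult_minus_distrib_mat_dims assoc_mult_mat_dims submatrix_eq_select_mat_assoc
        submatrix_Cmat_neighbours[OF i] A_CS submatrix_index dim_submatrix carrier_matD Least_eq_self)
  then show "(transpose_mat W * ?C * W) $$ (0,0) = Dval Z Sig N i \<theta>"
    unfolding Dval_def by simp
qed

lemma Dval_ge_noise: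
  assumes i: "i < n" and pos: "\<theta> 0 > 0"
  shows "\<theta> 0 \<le> Dval Z Sig N i \<theta>"
proof -
  obtain W where W: "W \<in> carrier_mat n 1" and Wi: "W $$ (i,0) = 1"
    and D: "(transpose_mat W * Cmat Z Sig \<theta> * W) $$ (0,0) = Dval Z Sig N i \<theta>"
    using Dval_quadratic_form[of i \<theta>, OF i pos] by blast
  have "(W $$ (i,0))\<^sup>2 \<le> (\<Sum>j<n. (W $$ (j,0))\<^sup>2)"
    by (rule member_le_sum) (use i in auto)
  then have "1 \<le> (transpose_mat W * W) $$ (0,0)"
    unfolding transpose_mult_self_sum_squares[OF W] Wi by simp
  then have "\<theta> 0 \<le> \<theta> 0 * (transpose_mat W * W) $$ (0,0)" using pos by simp
  also have "\<dots> \<le> Dval Z Sig N i \<theta>" using Cmat_quadratic_form_ge[OF W, of \<theta>] D by simp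
  finally show ?thesis .
qed

lemma Sig_mat_differentiable:
  assumes k: "k < q"
  shows "mat_differentiable (\<lambda>t. Sig (\<theta>(k := t))) x m m"
proof (cases "k = 0")
  case True
  then have "Sig (\<theta>(k := t)) = Sig \<theta>" for t by (intro Sig_dep) auto
  then show ?thesis using mat_differentiable_const[OF Sig_carrier] by simp
next
  case False
  then have "k \<in> {1..<q}" using k by auto
  from Sig_diff[OF this, where \<theta>'="\<theta>(k := x)"] show ?thesis
    unfolding mat_differentiable_def has_partial_deriv_at_def by (simp add: Sig_carrier)
qed

lemma ZSZ_mat_differentiable:
  assumes "k < q"
  shows "mat_differentiable (\<lambda>t. ZSZ Z Sig (\<theta>(k := t))) x n n"
  unfolding ZSZ_def
  by (rule mat_differentiable_mult[OF mat_differentiable_mult[OF mat_differentiable_const[OF Z]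
        Sig_mat_differentiable[OF assms]] mat_differentiable_const]) (use Z in simp)

lemma Cmat_mat_differentiable:
  assumes "k < q"
  shows "mat_differentiable (\<lambda>t. Cmat Z Sig (\<theta>(k := t))) x n n"
proof -
  have "(\<lambda>t. (\<theta>(k := t)) 0) differentiable (at x)" by (cases "k = 0") auto
  then show ?thesis
    unfolding Cmat_def using Z
    by (intro mat_differentiable_add ZSZ_mat_differentiable[OF assms] mat_differentiable_smult
        mat_differentiable_const) auto
qed

lemma Bmat_carrier: "Bmat Z Sig N \<theta> \<in> carrier_mat n n"
  unfolding Bmat_def using Z by simp

lemma index_Bmat:
  "i < n \<Longrightarrow> j < n \<Longrightarrow> Bmat Z Sig N \<theta> $$ (i,j) =
    (if i = j then 1 else if j \<in> N i then - (Avec Z Sig N i \<theta> $$ (0, card {a \<in> N i. a < j})) else 0)"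
  unfolding Bmat_def using Z by simp

lemma Bmat_diag: "i < n \<Longrightarrow> Bmat Z Sig N \<theta> $$ (i,i) = 1"
  by (simp add: index_Bmat)

lemma Bmat_upper: "i < j \<Longrightarrow> j < n \<Longrightarrow> Bmat Z Sig N \<theta> $$ (i,j) = 0"
  using N[of i] by (auto simp: index_Bmat)

lemma det_Bmat: "det (Bmat Z Sig N \<theta>) = 1"
  by (rule det_unit_lower_triangular[OF Bmat_carrier Bmat_diag Bmat_upper])

lemma Psi_carrier: "Psi Z Sig N \<theta> \<in> carrier_mat n n"
  using inv_mat(1)[OF Bmat_carrier, of \<theta>] unfolding Psi_def carrier_mat_def by (simp add: det_Bmat)

lemma mat_partial_deriv_Bmat_upper:
  assumes "i \<le> j" "j < n"
  shows "mat_partial_deriv (Bmat Z Sig N) k \<theta> $$ (i,j) = 0"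
proof -
  have "Bmat Z Sig N (\<theta>(k := t)) $$ (i,j) = (if i = j then 1 else 0)" for t
    using assms by (auto simp: Bmat_diag Bmat_upper)
  then have "partial_deriv (\<lambda>\<theta>'. Bmat Z Sig N \<theta>' $$ (i,j)) k \<theta> = 0"
    by (intro partial_deriv_eqI) simp
  then show ?thesis
    using Bmat_carrier[of \<theta>] assms by (simp add: mat_partial_deriv_def)
qed

context
  fixes \<theta> :: "nat \<Rightarrow> real" and k :: nat
  assumes pos: "\<theta> 0 > 0" and k: "k < q"
begin

lemma Avec_mat_differentiable:
  assumes i: "i < n"
  shows "mat_differentiable (\<lambda>t. Avec Z Sig N i (\<theta>(k := t))) (\<theta> k) 1 (card {j. j < n \<and> j \<in> N i})"
  unfolding Avec_def
proof (rule mat_differentiable_mult)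
  show "mat_differentiable (\<lambda>t. submatrix (ZSZ Z Sig (\<theta>(k := t))) {i} (N i)) (\<theta> k) 1 (card {j. j < n \<and> j \<in> N i})"
    using mat_differentiable_submatrix[OF ZSZ_mat_differentiable[OF k], of _ "{i}" "N i"]
    unfolding card_singleton_less[OF i] .
  have "\<forall>\<^sub>F t in nhds (\<theta> k). det (submatrix (Cmat Z Sig (\<theta>(k := t))) (N i) (N i)) \<noteq> 0"
    using eventually_noise_pos[of \<theta>, OF pos]
      by (rule eventually_mono) (rule det_submatrix_Cmat_nonzero)
  then show "mat_differentiable (\<lambda>t. inv_mat (submatrix (Cmat Z Sig (\<theta>(k := t))) (N i) (N i))) (\<theta> k)
      (card {j. j < n \<and> j \<in> N i}) (card {j. j < n \<and> j \<in> N i})"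
    by (rule mat_differentiable_inv_mat[OF mat_differentiable_submatrix[OF Cmat_mat_differentiable[OF k]]])
qed

lemma Dval_differentiable:
  assumes i: "i < n"
  shows "(\<lambda>t. Dval Z Sig N i (\<theta>(k := t))) differentiable (at (\<theta> k))"
proof -
  have "mat_differentiable (\<lambda>t. submatrix (ZSZ Z Sig (\<theta>(k := t))) (N i) {i}) (\<theta> k) (card {j. j < n \<and> j \<in> N i}) 1"
    using mat_differentiable_submatrix[OF ZSZ_mat_differentiable[OF k], of _ "N i" "{i}"]
    unfolding card_singleton_less[OF i] .
  then have "mat_differentiable
      (\<lambda>t. Avec Z Sig N i (\<theta>(k := t)) * submatrix (ZSZ Z Sig (\<theta>(k := t))) (N i) {i}) (\<theta> k) 1 1"
    by (rule mat_differentiable_mult[OF Avec_mat_differentiable[OF i]])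
  then have "(\<lambda>t. (Avec Z Sig N i (\<theta>(k := t)) * submatrix (ZSZ Z Sig (\<theta>(k := t))) (N i) {i}) $$ (0,0))
      differentiable (at (\<theta> k))"
    by (rule mat_differentiableD(2)) simp_all
  with mat_differentiableD(2)[OF Cmat_mat_differentiable[OF k] i i] show ?thesis
    unfolding Dval_def by (rule differentiable_diff)
qed

lemma Bmat_mat_differentiable:
  "mat_differentiable (\<lambda>t. Bmat Z Sig N (\<theta>(k := t))) (\<theta> k) n n"
  unfolding Bmat_def using Z
proof (simp only: carrier_matD, intro mat_differentiable_mat)
  fix i j assume ij: "i < n" "j < n"
  show "(\<lambda>t. if i = j then 1
      else if j \<in> N i then - (Avec Z Sig N i (\<theta>(k := t)) $$ (0, card {a \<in> N i. a < j})) else 0)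
      differentiable (at (\<theta> k))"
  proof (cases "i \<noteq> j \<and> j \<in> N i")
    case True
    then have "card {a \<in> N i. a < j} < card {j. j < n \<and> j \<in> N i}"
      using ij by (intro psubset_card_mono) auto
    then have "(\<lambda>t. Avec Z Sig N i (\<theta>(k := t)) $$ (0, card {a \<in> N i. a < j})) differentiable (at (\<theta> k))"
      by (intro mat_differentiableD(2)[OF Avec_mat_differentiable[OF ij(1)]]) simp_all
    then show ?thesis using True by simp
  qed (cases "i = j", auto)
qed

lemma Bmat_has_mat_derivative:
  "has_mat_derivative (\<lambda>t. Bmat Z Sig N (\<theta>(k := t))) (mat_partial_deriv (Bmat Z Sig N) k \<theta>) (\<theta> k) n n"
proof -
  obtain F where F: "has_mat_derivative (\<lambda>t. Bmat Z Sig N (\<theta>(k := t))) F (\<theta> k) n n"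
    using Bmat_mat_differentiable unfolding mat_differentiable_iff_has_mat_derivative by blast
  moreover from F have "mat_partial_deriv (Bmat Z Sig N) k \<theta> = F"
    by (rule mat_partial_deriv_eqI) (rule Bmat_carrier)
  ultimately show ?thesis by simp
qed

lemma Dmat_has_mat_derivative:
  "has_mat_derivative (\<lambda>t. Dmat Z Sig N (\<theta>(k := t)))
    (mat_diag n (\<lambda>i. partial_deriv (Dval Z Sig N i) k \<theta>)) (\<theta> k) n n"
  unfolding has_mat_derivative_def Dmat_def
proof (intro conjI allI impI)
  fix i j assume ij: "i < n" "j < n"
  show "((\<lambda>t. mat_diag (dim_row Z) (\<lambda>i. Dval Z Sig N i (\<theta>(k := t))) $$ (i,j)) has_real_derivative
      mat_diag n (\<lambda>i. partial_deriv (Dval Z Sig N i) k \<theta>) $$ (i,j)) (at (\<theta> k))"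
  proof (cases "i = j")
    case True
    then have "mat_diag n (\<lambda>i. partial_deriv (Dval Z Sig N i) k \<theta>) $$ (i,j) = partial_deriv (Dval Z Sig N i) k \<theta>"
      and "\<And>t. mat_diag (dim_row Z) (\<lambda>i. Dval Z Sig N i (\<theta>(k := t))) $$ (i,j) = Dval Z Sig N i (\<theta>(k := t))"
      using ij Z by (simp_all add: mat_diag_def)
    then show ?thesis
      using has_real_derivative_partial_deriv[OF Dval_differentiable[OF ij(1)]] by (simp only:)
  qed (use ij Z in \<open>simp add: mat_diag_def\<close>)
qed (use Z in auto)

lemma mat_partial_deriv_Psi:
  defines "Bi \<equiv> inv_mat (Bmat Z Sig N \<theta>)" and "dB \<equiv> mat_partial_deriv (Bmat Z Sig N) k \<theta>"
    and "dD \<equiv> mat_diag n (\<lambda>i. partial_deriv (Dval Z Sig N i) k \<theta>)"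
  shows "mat_partial_deriv (Psi Z Sig N) k \<theta> =
     (- (Bi * dB * Bi) * Dmat Z Sig N \<theta> + Bi * dD) * transpose_mat Bi
     + (Bi * Dmat Z Sig N \<theta>) * transpose_mat (- (Bi * dB * Bi))"
proof -
  have "\<forall>\<^sub>F t in nhds (\<theta> k). det (Bmat Z Sig N (\<theta>(k := t))) \<noteq> 0"
    by (simp add: det_Bmat)
  from has_mat_derivative_inv_mat[OF Bmat_has_mat_derivative this]
  have Binv: "has_mat_derivative (\<lambda>t. inv_mat (Bmat Z Sig N (\<theta>(k := t)))) (- (Bi * dB * Bi)) (\<theta> k) n n"
    unfolding Bi_def dB_def by simp
  have "has_mat_derivative (\<lambda>t. Psi Z Sig N (\<theta>(k := t)))
     ((- (Bi * dB * Bi) * Dmat Z Sig N \<theta> + Bi * dD) * transpose_mat Bi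
      + (Bi * Dmat Z Sig N \<theta>) * transpose_mat (- (Bi * dB * Bi))) (\<theta> k) n n"
    unfolding Psi_def
    using has_mat_derivative_mult[OF has_mat_derivative_mult[OF Binv Dmat_has_mat_derivative]
        has_mat_derivative_transpose[OF Binv]]
    unfolding Bi_def dD_def by simp
  then show ?thesis
    by (rule mat_partial_deriv_eqI) (rule Psi_carrier)
qed

end

end

section \<open>Fisher information of a factorisation \<open>B\<^sup>-\<^sup>1 D B\<^sup>-\<^sup>T\<close>\<close>

locale unit_lower_ldl =
  fixes n :: nat and B :: "real mat" and d :: "nat \<Rightarrow> real"
  assumes B: "B \<in> carrier_mat n n"
    and B_diag: "\<And>i. i < n \<Longrightarrow> B $$ (i,i) = 1"
    and B_upper: "\<And>i j. i < j \<Longrightarrow> j < n \<Longrightarrow> B $$ (i,j) = 0"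
    and d: "\<And>i. i < n \<Longrightarrow> d i \<noteq> 0"
begin

abbreviation Bi :: "real mat" where "Bi \<equiv> inv_mat B"

definition Dm :: "real mat" where "Dm = mat_diag n d"

definition Dinv :: "real mat" where "Dinv = mat_diag n (\<lambda>i. inverse (d i))"

text \<open>The product rule for \<open>B\<^sup>-\<^sup>1 D B\<^sup>-\<^sup>T\<close> when \<open>B\<close> has derivative \<open>dB\<close> and \<open>d\<close> has
  derivative \<open>e\<close>; recall that \<open>B\<^sup>-\<^sup>1\<close> has derivative \<open>- B\<^sup>-\<^sup>1 dB B\<^sup>-\<^sup>1\<close>.\<close>

definition Psi_deriv :: "real mat \<Rightarrow> (nat \<Rightarrow> real) \<Rightarrow> real mat" where
  "Psi_deriv dB e = (- (Bi * dB * Bi) * Dm + Bi * mat_diag n e) * transpose_mat Bi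
     + (Bi * Dm) * transpose_mat (- (Bi * dB * Bi))"

definition normalized_deriv :: "real mat \<Rightarrow> (nat \<Rightarrow> real) \<Rightarrow> real mat" where
  "normalized_deriv dB e = - (Dinv * (dB * (Bi * Dm))) + Dinv * mat_diag n e - transpose_mat (dB * Bi)"

lemma det_B: "det B = 1"
  by (rule det_unit_lower_triangular[OF B B_diag B_upper])

lemma inv_B: "Bi \<in> carrier_mat n n" "B * Bi = 1\<^sub>m n" "Bi * B = 1\<^sub>m n"
  using inv_mat[OF B] det_B by auto

lemma Bi_upper: "a < j \<Longrightarrow> j < n \<Longrightarrow> Bi $$ (a,j) = 0"
  by (rule inv_mat_unit_lower_triangular[OF B B_diag B_upper])

lemma dim_factors [simp]:
  "dim_row B = n" "dim_col B = n" "dim_row Bi = n" "dim_col Bi = n"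
  "dim_row Dm = n" "dim_col Dm = n" "dim_row Dinv = n" "dim_col Dinv = n"
  using B inv_B(1) by (auto simp: Dm_def Dinv_def)

lemma Dm_Dinv: "Dm * Dinv = 1\<^sub>m n" "Dinv * Dm = 1\<^sub>m n"
proof -
  have "mat_diag n (\<lambda>i. d i * inverse (d i)) = 1\<^sub>m n" "mat_diag n (\<lambda>i. inverse (d i) * d i) = 1\<^sub>m n"
    using d by (auto intro!: eq_matI simp: mat_diag_def)
  then show "Dm * Dinv = 1\<^sub>m n" "Dinv * Dm = 1\<^sub>m n"
    unfolding Dm_def Dinv_def by simp_all
qed

lemma transpose_B_Bi:
  "transpose_mat Bi * transpose_mat B = 1\<^sub>m n" "transpose_mat B * transpose_mat Bi = 1\<^sub>m n"
  using inv_B(2,3) by (simp_all add: transpose_mult_dims[symmetric])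

lemma cancel_inverses:
  "dim_row X = n \<Longrightarrow> B * (Bi * X) = X"
  "dim_row X = n \<Longrightarrow> Bi * (B * X) = X"
  "dim_row X = n \<Longrightarrow> Dm * (Dinv * X) = X"
  "dim_row X = n \<Longrightarrow> Dinv * (Dm * X) = X"
  "dim_row X = n \<Longrightarrow> transpose_mat Bi * (transpose_mat B * X) = X"
  "dim_row X = n \<Longrightarrow> transpose_mat B * (transpose_mat Bi * X) = X"
  by (simp_all add: assoc_mult_mat_dims[symmetric] inv_B Dm_Dinv transpose_B_Bi)

lemmas ldl_simps = mat_dims_simps cancel_inverses inv_B(2,3) Dm_Dinv transpose_B_Bi transpose_uminus

lemma inv_mat_Dm: "inv_mat Dm = Dinv"
  by (rule inv_mat_eqI[OF _ _ Dm_Dinv(1)]) (auto intro: carrier_matI)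

lemma inv_mat_Psi: "inv_mat (Bi * Dm * transpose_mat Bi) = transpose_mat B * Dinv * B"
  by (rule inv_mat_eqI[of _ n]) (auto simp: ldl_simps intro!: carrier_matI)

lemma Psi_deriv_carrier: "dB \<in> carrier_mat n n \<Longrightarrow> Psi_deriv dB e \<in> carrier_mat n n"
  unfolding Psi_deriv_def by (intro carrier_matI) auto

lemma normalized_deriv_carrier: "dB \<in> carrier_mat n n \<Longrightarrow> normalized_deriv dB e \<in> carrier_mat n n"
  unfolding normalized_deriv_def by (intro carrier_matI) auto

text \<open>Conjugating \<open>\<Psi>\<^sup>-\<^sup>1 \<partial>\<Psi>\<close> by \<open>B\<^sup>T\<close> gives the normalized derivative; the trace is unchanged.\<close>

lemma normalized_deriv_eq:
  "dB \<in> carrier_mat n n \<Longrightarrow> Dinv * (B * (Psi_deriv dB e * transpose_mat B)) = normalized_deriv dB e"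
  unfolding Psi_deriv_def normalized_deriv_def by (simp add: ldl_simps add_uminus_mat_dims)

lemma trace_Psi_inv_mult:
  assumes Pk: "Pk \<in> carrier_mat n n" and Pl: "Pl \<in> carrier_mat n n"
  shows "trace_mat (transpose_mat B * Dinv * B * Pk * (transpose_mat B * Dinv * B) * Pl) =
         trace_mat ((Dinv * (B * (Pk * transpose_mat B))) * (Dinv * (B * (Pl * transpose_mat B))))"
proof -
  let ?Y = "(Dinv * (B * (Pk * transpose_mat B))) * (Dinv * (B * (Pl * transpose_mat B))) * transpose_mat Bi"
  have Y: "?Y \<in> carrier_mat n n" using Pk Pl by (intro carrier_matI) auto
  have "transpose_mat B * Dinv * B * Pk * (transpose_mat B * Dinv * B) * Pl = transpose_mat B * ?Y"
    using Pk Pl by (simp add: ldl_simps)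
  then have "trace_mat (transpose_mat B * Dinv * B * Pk * (transpose_mat B * Dinv * B) * Pl) =
      trace_mat (?Y * transpose_mat B)"
    using trace_mat_mult_commute[OF _ Y, of "transpose_mat B"] B by simp
  also have "?Y * transpose_mat B = (Dinv * (B * (Pk * transpose_mat B))) * (Dinv * (B * (Pl * transpose_mat B)))"
    using Pk Pl by (simp add: ldl_simps)
  finally show ?thesis .
qed

lemma index_Dinv_mult:
  "X \<in> carrier_mat n n \<Longrightarrow> i < n \<Longrightarrow> j < n \<Longrightarrow> (Dinv * X) $$ (i,j) = inverse (d i) * X $$ (i,j)"
  unfolding Dinv_def by (simp add: mat_diag_mult_left)

lemma index_mult_Dm:
  "X \<in> carrier_mat n n \<Longrightarrow> i < n \<Longrightarrow> j < n \<Longrightarrow> (X * Dm) $$ (i,j) = X $$ (i,j) * d j"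
  unfolding Dm_def by (simp add: mat_diag_mult_right)

lemma index_normalized_deriv:
  assumes dB: "dB \<in> carrier_mat n n" and ij: "i < n" "j < n"
  shows "normalized_deriv dB e $$ (i,j) =
    - (inverse (d i) * (dB * Bi) $$ (i,j) * d j) + (if i = j then inverse (d i) * e i else 0)
    - (dB * Bi) $$ (j,i)"
proof -
  have P: "dB * Bi \<in> carrier_mat n n" and PD: "dB * Bi * Dm \<in> carrier_mat n n"
    using dB by (auto intro: carrier_matI)
  have "Dinv * (dB * (Bi * Dm)) = Dinv * ((dB * Bi) * Dm)" using dB
    by (simp add: assoc_mult_mat_dims)
  then have "(Dinv * (dB * (Bi * Dm))) $$ (i,j) = inverse (d i) * (dB * Bi) $$ (i,j) * d j"
    using index_Dinv_mult[OF PD ij] index_mult_Dm[OF P ij] by simp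
  moreover have "(Dinv * mat_diag n e) $$ (i,j) = (if i = j then inverse (d i) * e i else 0)"
    using ij unfolding Dinv_def mat_diag_diag by (simp add: mat_diag_def)
  ultimately show ?thesis unfolding normalized_deriv_def using dB ij by simp
qed

text \<open>\<open>dB B\<^sup>-\<^sup>1\<close> is strictly lower triangular, so in \<open>tr(M\<^sub>k M\<^sub>l)\<close> only the products of the
  strictly lower part of one factor with the strictly upper part of the other, and of the
  diagonals, survive.\<close>

lemma trace_normalized_deriv_mult:
  assumes dBk: "dBk \<in> carrier_mat n n" and dBk0: "\<And>i j. i \<le> j \<Longrightarrow> j < n \<Longrightarrow> dBk $$ (i,j) = 0"
    and dBl: "dBl \<in> carrier_mat n n" and dBl0: "\<And>i j. i \<le> j \<Longrightarrow> j < n \<Longrightarrow> dBl $$ (i,j) = 0"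
  shows "trace_mat (normalized_deriv dBk ek * normalized_deriv dBl el) =
     2 * (\<Sum>i<n. \<Sum>j<n. inverse (d i) * (dBk * Bi) $$ (i,j) * ((dBl * Bi) $$ (i,j) * d j))
     + (\<Sum>i<n. inverse ((d i)\<^sup>2) * ek i * el i)"
proof -
  let ?p = "\<lambda>i j. (dBk * Bi) $$ (i,j)" and ?r = "\<lambda>i j. (dBl * Bi) $$ (i,j)"
  let ?F = "\<lambda>i j. inverse (d i) * ?p i j * (?r i j * d j)"
  let ?G = "\<lambda>i. inverse ((d i)\<^sup>2) * ek i * el i"
  note Mk = normalized_deriv_carrier[OF dBk] and Ml = normalized_deriv_carrier[OF dBl]
  have pz: "?p a b = 0" and rz: "?r a b = 0" if "a \<le> b" "b < n" for a b
    using strictly_lower_triangular_mult[OF _ _ inv_B(1) Bi_upper] dBk dBk0 dBl dBl0 that by blast+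
  have "trace_mat (normalized_deriv dBk ek * normalized_deriv dBl el)
      = (\<Sum>i<n. \<Sum>j<n. normalized_deriv dBk ek $$ (i,j) * normalized_deriv dBl el $$ (j,i))"
    unfolding trace_mat_def using Mk Ml by (intro sum.cong refl index_mult_mat_sum) auto
  also have "\<dots> = (\<Sum>i<n. \<Sum>j<n. ?F i j + ?F j i + (if j = i then ?G i else 0))"
  proof (intro sum.cong refl)
    fix i j assume "i \<in> {..<n}" "j \<in> {..<n}"
    then have ij: "i < n" "j < n" by auto
    consider "i < j" | "i = j" | "j < i" by linarith
    then show "normalized_deriv dBk ek $$ (i,j) * normalized_deriv dBl el $$ (j,i) =
        ?F i j + ?F j i + (if j = i then ?G i else 0)"
      by cases (use ij pz rz d in \<open>auto simp: index_normalized_deriv[OF dBk] index_normalized_deriv[OF dBl]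
        field_simps power2_eq_square\<close>)
  qed
  also have "\<dots> = (\<Sum>i<n. \<Sum>j<n. ?F i j) + (\<Sum>i<n. \<Sum>j<n. ?F j i) + (\<Sum>i<n. ?G i)"
    by (simp add: sum.distrib)
  also have "(\<Sum>i<n. \<Sum>j<n. ?F j i) = (\<Sum>i<n. \<Sum>j<n. ?F i j)" by (rule sum.swap)
  finally show ?thesis by simp
qed

lemma fisher_trace_formula:
  assumes dBk: "dBk \<in> carrier_mat n n" and dBk0: "\<And>i j. i \<le> j \<Longrightarrow> j < n \<Longrightarrow> dBk $$ (i,j) = 0"
    and dBl: "dBl \<in> carrier_mat n n" and dBl0: "\<And>i j. i \<le> j \<Longrightarrow> j < n \<Longrightarrow> dBl $$ (i,j) = 0"
  shows "1/2 * trace_mat (inv_mat (Bi * Dm * transpose_mat Bi) * Psi_deriv dBk ek *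
      inv_mat (Bi * Dm * transpose_mat Bi) * Psi_deriv dBl el)
    = (\<Sum>i<n. \<Sum>j<n. (inv_mat Dm * dBk * Bi) $$ (i,j) * (dBl * Bi * Dm) $$ (i,j))
      + 1/2 * (\<Sum>i<n. inverse ((d i)\<^sup>2) * ek i * el i)"
proof -
  have "trace_mat (inv_mat (Bi * Dm * transpose_mat Bi) * Psi_deriv dBk ek *
      inv_mat (Bi * Dm * transpose_mat Bi) * Psi_deriv dBl el)
      = trace_mat (normalized_deriv dBk ek * normalized_deriv dBl el)"
    unfolding inv_mat_Psi trace_Psi_inv_mult[OF Psi_deriv_carrier[OF dBk] Psi_deriv_carrier[OF dBl]]
      normalized_deriv_eq[OF dBk] normalized_deriv_eq[OF dBl] ..
  also have "\<dots> = 2 * (\<Sum>i<n. \<Sum>j<n. inverse (d i) * (dBk * Bi) $$ (i,j) * ((dBl * Bi) $$ (i,j) * d j))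
      + (\<Sum>i<n. inverse ((d i)\<^sup>2) * ek i * el i)"
    by (rule trace_normalized_deriv_mult[OF dBk dBk0 dBl dBl0])
  also have "(\<Sum>i<n. \<Sum>j<n. inverse (d i) * (dBk * Bi) $$ (i,j) * ((dBl * Bi) $$ (i,j) * d j))
      = (\<Sum>i<n. \<Sum>j<n. (inv_mat Dm * dBk * Bi) $$ (i,j) * (dBl * Bi * Dm) $$ (i,j))"
  proof (intro sum.cong refl)
    fix i j assume "i \<in> {..<n}" "j \<in> {..<n}"
    then have ij: "i < n" "j < n" by auto
    have P: "dBk * Bi \<in> carrier_mat n n" "dBl * Bi \<in> carrier_mat n n"
      using dBk dBl by (auto intro: carrier_matI)
    have "inv_mat Dm * dBk * Bi = Dinv * (dBk * Bi)" unfolding inv_mat_Dm using dBk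
      by (simp add: assoc_mult_mat_dims)
    then show "inverse (d i) * (dBk * Bi) $$ (i,j) * ((dBl * Bi) $$ (i,j) * d j)
      = (inv_mat Dm * dBk * Bi) $$ (i,j) * (dBl * Bi * Dm) $$ (i,j)"
      using index_Dinv_mult[OF P(1) ij] index_mult_Dm[OF P(2) ij] by simp
  qed
  finally show ?thesis by simp
qed

end

theorem proposition2:
  fixes n m q :: nat and Z :: "real mat" and Sig :: "(nat \<Rightarrow> real) \<Rightarrow> real mat"
    and N :: "nat \<Rightarrow> nat set" and \<theta> :: "nat \<Rightarrow> real" and k l :: nat
  assumes Z: "Z \<in> carrier_mat n m"
    and q: "q \<ge> 1"
    and sigma_pos: "\<theta> 0 > 0"
    and Sig_dep: "\<And>\<theta>1 \<theta>2. (\<forall>j\<in>{1..<q}. \<theta>1 j = \<theta>2 j) \<Longrightarrow> Sig \<theta>1 = Sig \<theta>2"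
    and Sig_cov: "\<And>\<theta>'. covariance_mat m (Sig \<theta>')"
    and Sig_diff: "\<And>\<theta>' j a b. j \<in> {1..<q} \<Longrightarrow> a < m \<Longrightarrow> b < m \<Longrightarrow>
                      has_partial_deriv_at (\<lambda>\<theta>''. Sig \<theta>'' $$ (a,b)) j \<theta>'"
    and N: "\<And>i. i < n \<Longrightarrow> N i \<subseteq> {..<i}"
    and kl: "k < q" "l < q"
  shows "fisher_info Z Sig N \<theta> k l =
      (\<Sum>i<n. \<Sum>j<n.
         (inv_mat (Dmat Z Sig N \<theta>) * mat_partial_deriv (Bmat Z Sig N) k \<theta> * inv_mat (Bmat Z Sig N \<theta>)) $$ (i,j) *
         (mat_partial_deriv (Bmat Z Sig N) l \<theta> * inv_mat (Bmat Z Sig N \<theta>) * Dmat Z Sig N \<theta>) $$ (i,j))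
      + 1/2 * (\<Sum>i<n. inverse ((Dval Z Sig N i \<theta>)\<^sup>2) *
               partial_deriv (Dval Z Sig N i) k \<theta> * partial_deriv (Dval Z Sig N i) l \<theta>)"
proof -
  interpret V: vecchia n m q Z Sig N
    using Z Sig_dep Sig_cov Sig_diff N by unfold_locales
  interpret L: unit_lower_ldl n "Bmat Z Sig N \<theta>" "\<lambda>i. Dval Z Sig N i \<theta>"
  proof
    show "Dval Z Sig N i \<theta> \<noteq> 0" if "i < n" for i
      using V.Dval_ge_noise[of i \<theta>, OF that sigma_pos] sigma_pos by linarith
  qed (fact V.Bmat_carrier V.Bmat_diag V.Bmat_upper)+
  have Dmat: "Dmat Z Sig N \<theta> = L.Dm"
    unfolding Dmat_def L.Dm_def using Z by simp
  have dPsi: "mat_partial_deriv (Psi Z Sig N) k' \<theta> =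
      L.Psi_deriv (mat_partial_deriv (Bmat Z Sig N) k' \<theta>) (\<lambda>i. partial_deriv (Dval Z Sig N i) k' \<theta>)"
    if "k' < q" for k'
    using V.mat_partial_deriv_Psi[of \<theta> k', OF sigma_pos that] unfolding L.Psi_deriv_def Dmat .
  have dB: "mat_partial_deriv (Bmat Z Sig N) k' \<theta> \<in> carrier_mat n n" for k'
    using V.Bmat_carrier[of \<theta>] by (simp add: mat_partial_deriv_def carrier_matI)
  show ?thesis
    unfolding fisher_info_def Psi_def dPsi[OF kl(1)] dPsi[OF kl(2)] Dmat
    using L.fisher_trace_formula[OF dB V.mat_partial_deriv_Bmat_upper dB V.mat_partial_deriv_Bmat_upper]
    by simp
qed

end
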